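(* Let $X$ be a $d$-dimensional random vector with a probability density function, and let $X_1,\dots,X_n$ be i.i.d. copies of $X$. For $x_1,x_2\in\mathbb R^d$ define $G(x_1,x_2)=\Pr[x_1\le X\le x_2]$ and $G_n(x_1,x_2)=\frac1n\sum_{i=1}^n I_{\{X_i\in[x_1,x_2]\}}$. Then for any $\epsilon>0$, $$\Pr\Big[\sup_{x_1,x_2\in\mathbb R^d}|G_n(x_1,x_2)-G(x_1,x_2)|>\epsilon\Big]\le 2n^{2d}\exp(-2n\epsilon^2+16\epsilon d),$$ $$\Pr\Big[\sup_{x_1,x_2\in\mathbb R^d}|G_n(x_1,x_2)-G(x_1,x_2)|>\frac{4d}{n}+\epsilon\Big]\le 2n^{2d}\exp(-2n\epsilon^2).$$
   Context: Inequalities between vectors are componentwise; $[x_1,x_2]=\{y\in\mathbb R^d: x_1\le y\le x_2\}$ and $I$ denotes an indicator. *)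

theory Defs
  imports "HOL-Probability.Probability"
begin

definition box_prob :: "'a measure \<Rightarrow> ('a \<Rightarrow> real^'d) \<Rightarrow> real^'d \<Rightarrow> real^'d \<Rightarrow> real" where
  "box_prob M X x1 x2 = measure M {\<omega> \<in> space M. x1 \<le> X \<omega> \<and> X \<omega> \<le> x2}"

definition emp_box_prob :: "nat \<Rightarrow> (nat \<Rightarrow> 'a \<Rightarrow> real^'d) \<Rightarrow> 'a \<Rightarrow> real^'d \<Rightarrow> real^'d \<Rightarrow> real" where
  "emp_box_prob n Xs \<omega> x1 x2 = (1 / real n) * (\<Sum>i\<in>{1..n}. indicator {x1..x2} (Xs i \<omega>))"

end

theory Submission
  imports Defs
begin

text \<open>
  Let \<open>F\<^sub>k\<close> be the (continuous) distribution function of the \<open>k\<close>-th coordinate of \<open>X\<close>.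
  The levels \<open>F\<^sub>k = j/n\<close> cut the line into \<open>n\<close> cells, each of probability at most \<open>1/n\<close>.
  Rounding \<open>F\<^sub>k(x\<^sub>1 $ k)\<close> down and \<open>F\<^sub>k(x\<^sub>2 $ k)\<close> up to this grid sandwiches every box
  \<open>[x\<^sub>1, x\<^sub>2]\<close> between two grid boxes whose probabilities differ by at most \<open>2d/n\<close>.
  Empirical and true probabilities are both monotone, so the discrepancy on \<open>[x\<^sub>1, x\<^sub>2]\<close>
  exceeds the larger discrepancy on the two grid boxes by at most \<open>2d/n\<close>.
  There are only \<open>n\<^sup>2\<^sup>d\<close> grid boxes, so Hoeffding's inequality and a union bound give
  \<open>Pr[sup > s + 2d/n] \<le> 2 n\<^sup>2\<^sup>d exp(-2ns\<^sup>2)\<close>; the two bounds follow with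
  \<open>s = \<epsilon> - 2d/n\<close> and \<open>s = \<epsilon> + 2d/n\<close> respectively.
\<close>

lemma (in real_distribution) borel_measurable_cdf [measurable]: "cdf M \<in> borel_measurable borel"
  by (rule borel_measurable_mono) (simp add: mono_def cdf_nondecreasing)

lemma (in real_distribution) measure_cdf_le:
  assumes atomless: "\<And>t. measure M {t} = 0" and "0 \<le> u"
  shows "measure M {t. cdf M t \<le> u} \<le> u"
proof (cases "\<forall>t. cdf M t \<le> u")
  case True
  have "1 \<le> u"
    using cdf_lim_at_top_prob by (rule tendsto_upperbound) (use True in auto)
  then show ?thesis
    using prob_le_1 order.trans by blast
next
  case False
  then obtain t0 where "u < cdf M t0" by (auto simp: not_le)
  define A where "A = {t. cdf M t \<le> u}"
  have A_below: "t < t0" if "t \<in> A" for t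
    using that \<open>u < cdf M t0\<close> cdf_nondecreasing[of t0 t] by (force simp: A_def)
  show ?thesis
  proof (cases "A = {}")
    case True
    then show ?thesis using \<open>0 \<le> u\<close> by (simp add: A_def)
  next
    case False
    define s where "s = Sup A"
    have "bdd_above A" using A_below by (meson bdd_aboveI less_imp_le)
    have "(cdf M \<longlongrightarrow> cdf M s) (at_left s)"
      using atomless isCont_cdf by (simp add: isCont_def filterlim_at_split)
    moreover have "eventually (\<lambda>t. cdf M t \<le> u) (at_left s)"
    proof -
      have "cdf M t \<le> u" if "t < s" for t
      proof -
        obtain a where "a \<in> A" "t < a"
          using \<open>t < s\<close> False \<open>bdd_above A\<close> less_cSup_iff by (auto simp: s_def)
        then show ?thesis using cdf_nondecreasing[of t a] by (simp add: A_def)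
      qed
      then show ?thesis by (intro eventually_at_leftI[of "s - 1"]) auto
    qed
    ultimately have "cdf M s \<le> u"
      by (rule tendsto_upperbound) simp
    have "measure M A \<le> measure M {..s}"
      using \<open>bdd_above A\<close> by (intro finite_measure_mono) (auto simp: s_def intro: cSup_upper)
    then show ?thesis using \<open>cdf M s \<le> u\<close> by (simp add: A_def cdf_def)
  qed
qed

lemma (in real_distribution) measure_lessThan_eq_cdf:
  assumes "measure M {t} = 0"
  shows "measure M {..<t} = cdf M t"
proof -
  have "{..<t} = {..t} - {t}" by auto
  then show ?thesis
    using finite_measure_Diff[of "{..t}" "{t}"] assms by (simp add: cdf_def)
qed

lemma (in real_distribution) measure_cdf_less_ge:
  assumes atomless: "\<And>t. measure M {t} = 0" and "v \<le> 1"
  shows "v \<le> measure M {t. cdf M t < v}"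
proof (cases "\<forall>t. cdf M t < v")
  case True
  then show ?thesis using \<open>v \<le> 1\<close> prob_space by simp
next
  case False
  then obtain t0 where "v \<le> cdf M t0" by (auto simp: not_less)
  define B where "B = {t. cdf M t < v}"
  have B_below: "t < t0" if "t \<in> B" for t
    using that \<open>v \<le> cdf M t0\<close> cdf_nondecreasing[of t0 t] by (force simp: B_def)
  show ?thesis
  proof (cases "B = {}")
    case True
    have "v \<le> 0"
      using cdf_lim_at_bot by (rule tendsto_lowerbound) (use True in \<open>auto simp: B_def not_less\<close>)
    then show ?thesis using measure_nonneg order.trans by blast
  next
    case False
    define s where "s = Sup B"
    have "bdd_above B" using B_below by (meson bdd_aboveI less_imp_le)
    have "(cdf M \<longlongrightarrow> cdf M s) (at_right s)"
      using cdf_is_right_cont by (simp add: continuous_within)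
    moreover have "eventually (\<lambda>t. v \<le> cdf M t) (at_right s)"
    proof -
      have "v \<le> cdf M t" if "s < t" for t
        using that \<open>bdd_above B\<close> cSup_upper[of t B] by (force simp: s_def B_def)
      then show ?thesis by (intro eventually_at_rightI[of s "s + 1"]) auto
    qed
    ultimately have "v \<le> cdf M s"
      by (rule tendsto_lowerbound) simp
    have "{..<s} \<subseteq> B"
    proof
      fix t assume "t \<in> {..<s}"
      then obtain b where "b \<in> B" "t < b"
        using False \<open>bdd_above B\<close> less_cSup_iff by (auto simp: s_def)
      then show "t \<in> B" using cdf_nondecreasing[of t b] by (simp add: B_def)
    qed
    then have "measure M {..<s} \<le> measure M B"
      by (intro finite_measure_mono) (auto simp: B_def)
    then show ?thesis
      using \<open>v \<le> cdf M s\<close> measure_lessThan_eq_cdf[OF atomless] by (simp add: B_def)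
  qed
qed

lemma (in real_distribution) measure_cdf_between:
  assumes atomless: "\<And>t. measure M {t} = 0" and "0 \<le> v" "v \<le> u" "u \<le> 1"
  shows "measure M {t. v \<le> cdf M t \<and> cdf M t \<le> u} \<le> u - v"
proof -
  have "measure M {t. v \<le> cdf M t \<and> cdf M t \<le> u} + measure M {t. cdf M t < v}
      = measure M ({t. v \<le> cdf M t \<and> cdf M t \<le> u} \<union> {t. cdf M t < v})"
    by (intro finite_measure_Union[symmetric]) auto
  also have "\<dots> \<le> measure M {t. cdf M t \<le> u}"
    using \<open>v \<le> u\<close> by (intro finite_measure_mono) auto
  also have "\<dots> \<le> u"
    using assms by (intro measure_cdf_le) auto
  moreover have "v \<le> measure M {t. cdf M t < v}"
    using assms by (intro measure_cdf_less_ge) auto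
  ultimately show ?thesis by linarith
qed

text \<open>
  The clamping keeps \<open>grid_floor n y\<close> in \<open>{..<n}\<close> and \<open>grid_ceiling n y\<close> in \<open>{1..n}\<close>
  for \<open>0 \<le> y \<le> 1\<close>: \<open>n\<close> choices each rather than \<open>n + 1\<close>, which is what yields
  \<open>n\<^sup>2\<^sup>d\<close> (and not \<open>(n + 1)\<^sup>2\<^sup>d\<close>) grid boxes.
\<close>

definition grid_floor :: "nat \<Rightarrow> real \<Rightarrow> nat" where
  "grid_floor n y = min (n - 1) (nat \<lfloor>real n * y\<rfloor>)"

definition grid_ceiling :: "nat \<Rightarrow> real \<Rightarrow> nat" where
  "grid_ceiling n y = max 1 (nat \<lceil>real n * y\<rceil>)"

lemma grid_floor_less: "1 \<le> n \<Longrightarrow> grid_floor n y < n"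
  by (simp add: grid_floor_def)

lemma grid_floor_le:
  assumes "0 \<le> y"
  shows "real (grid_floor n y) / real n \<le> y"
proof (cases "n = 0")
  case False
  have "real (grid_floor n y) \<le> real (nat \<lfloor>real n * y\<rfloor>)"
    by (simp add: grid_floor_def)
  also have "\<dots> \<le> real n * y"
    using \<open>0 \<le> y\<close> by simp
  finally show ?thesis
    using False by (simp add: divide_le_eq mult.commute)
qed (use assms in simp)

lemma grid_floor_Suc_le_imp_less:
  assumes "1 \<le> n" "real (grid_floor n y + 1) / real n \<le> z" "z < 1"
  shows "y < z"
proof -
  have "real (grid_floor n y + 1) \<le> real n * z"
    using assms by (simp add: divide_le_eq mult.commute)
  also have "\<dots> < real n"
    using assms by simp
  finally have "real (grid_floor n y + 1) < real n" .
  then have "grid_floor n y = nat \<lfloor>real n * y\<rfloor>"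
    by (simp add: grid_floor_def)
  then have "real n * y < real (grid_floor n y + 1)"
    by linarith
  also have "\<dots> \<le> real n * z"
    using assms by (simp add: divide_le_eq mult.commute)
  finally show ?thesis
    using assms by (simp add: mult_less_cancel_left)
qed

lemma grid_ceiling_pos: "0 < grid_ceiling n y"
  by (simp add: grid_ceiling_def)

lemma grid_ceiling_le: "1 \<le> n \<Longrightarrow> y \<le> 1 \<Longrightarrow> grid_ceiling n y \<le> n"
proof -
  assume "1 \<le> n" "y \<le> 1"
  then have "real n * y \<le> real n" by (simp add: mult_left_le)
  then have "\<lceil>real n * y\<rceil> \<le> int n" by (simp add: ceiling_le_iff)
  with \<open>1 \<le> n\<close> show ?thesis
    unfolding grid_ceiling_def by (metis max.boundedI nat_le_iff)
qed

lemma le_grid_ceiling: "1 \<le> n \<Longrightarrow> y \<le> real (grid_ceiling n y) / real n"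
proof -
  assume "1 \<le> n"
  have "real n * y \<le> real (grid_ceiling n y)"
    unfolding grid_ceiling_def by linarith
  with \<open>1 \<le> n\<close> show ?thesis by (simp add: le_divide_eq mult.commute)
qed

lemma le_grid_ceiling_pred_imp_less:
  assumes "1 \<le> n" "z \<le> real (grid_ceiling n y - 1) / real n" "0 < z"
  shows "z < y"
proof -
  have "1 < grid_ceiling n y"
    using assms by (cases "grid_ceiling n y = 1") auto
  then have "grid_ceiling n y = nat \<lceil>real n * y\<rceil>"
    by (simp add: grid_ceiling_def)
  then have "real (grid_ceiling n y - 1) < real n * y"
    using \<open>1 < grid_ceiling n y\<close> by linarith
  moreover have "real n * z \<le> real (grid_ceiling n y - 1)"
    using assms by (simp add: le_divide_eq mult.commute)
  ultimately have "real n * z < real n * y"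
    by linarith
  then show ?thesis
    using assms by (simp add: mult_less_cancel_left)
qed

lemma (in prob_space) Hoeffding_empirical_frequency:
  fixes Xs :: "'i \<Rightarrow> 'a \<Rightarrow> 'b::topological_space" and X :: "'a \<Rightarrow> 'b" and s :: real
  assumes indep: "indep_vars (\<lambda>_. borel) Xs I" and "finite I" "I \<noteq> {}"
    and ident: "\<And>i. i \<in> I \<Longrightarrow> distr M borel (Xs i) = distr M borel X"
    and [measurable]: "X \<in> borel_measurable M" "S \<in> sets borel" and "0 \<le> s"
  shows "prob {\<omega> \<in> space M. s \<le> \<bar>(\<Sum>i\<in>I. indicator S (Xs i \<omega>)) / real (card I)
                                      - prob {\<omega> \<in> space M. X \<omega> \<in> S}\<bar>}
           \<le> 2 * exp (- 2 * real (card I) * s\<^sup>2)"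
proof -
  let ?ind = "indicator S :: 'b \<Rightarrow> real"
  interpret Hoeffding_ineq_iid M I "\<lambda>i \<omega>. ?ind (Xs i \<omega>)" "\<lambda>\<omega>. ?ind (X \<omega>)" 0 1
    "expectation (\<lambda>\<omega>. ?ind (X \<omega>))"
  proof unfold_locales
    show "indep_vars (\<lambda>_. borel) (\<lambda>i \<omega>. ?ind (Xs i \<omega>)) I"
      using indep_vars_compose2[OF indep, of "\<lambda>_. ?ind" "\<lambda>_. borel"] by simp
  next
    fix i assume "i \<in> I"
    then have [measurable]: "Xs i \<in> borel_measurable M"
      using indep by (auto simp: indep_vars_def)
    have "distr M borel (\<lambda>\<omega>. ?ind (Xs i \<omega>)) = distr (distr M borel (Xs i)) borel ?ind"
      by (simp add: distr_distr comp_def)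
    also have "\<dots> = distr M borel (\<lambda>\<omega>. ?ind (X \<omega>))"
      using ident \<open>i \<in> I\<close> by (simp add: distr_distr comp_def)
    finally show "distr M borel (\<lambda>\<omega>. ?ind (Xs i \<omega>)) = distr M borel (\<lambda>\<omega>. ?ind (X \<omega>))" .
  qed (use \<open>finite I\<close> in \<open>auto simp: indicator_def\<close>)
  have "expectation (\<lambda>\<omega>. ?ind (X \<omega>)) = expectation (indicator (X -` S \<inter> space M))"
    by (intro Bochner_Integration.integral_cong) (auto simp: indicator_def)
  also have "\<dots> = prob {\<omega> \<in> space M. X \<omega> \<in> S}"
    by (simp add: vimage_def Int_def conj_commute)
  finally show ?thesis
    using Hoeffding_ineq_abs_ge'[of s] assms by simp
qed

lemma hyperplane_null_sets_lborel: "{x::real^'d. x $ k = t} \<in> null_sets lborel"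
proof -
  have "negligible {x::real^'d. x \<bullet> axis k 1 = t}"
    by (rule negligible_standard_hyperplane) simp
  then have "{x::real^'d. x $ k = t} \<in> null_sets lebesgue"
    by (simp add: negligible_iff_null_sets cart_eq_inner_axis)
  moreover have "{x::real^'d. x $ k = t} \<in> sets borel"
    by measurable
  ultimately show ?thesis
    by (simp add: null_sets_completion_iff)
qed

lemma (in prob_space) prob_coordinate_eq_0_if_distributed:
  fixes X :: "'a \<Rightarrow> real^'d"
  assumes "distributed M lborel X f"
  shows "prob {\<omega> \<in> space M. X \<omega> $ k = t} = 0"
proof -
  have [measurable]: "X \<in> borel_measurable M"
    using assms distributed_measurable measurable_lborel1 by metis
  have "prob {\<omega> \<in> space M. X \<omega> $ k = t} = measure (distr M lborel X) {x. x $ k = t}"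
    by (simp add: measure_distr vimage_def Int_def conj_commute)
  also have "\<dots> = measure (density lborel f) {x. x $ k = t}"
    using assms distributed_distr_eq_density by metis
  also have "\<dots> = 0"
  proof (rule measure_eq_0_null_sets)
    show "{x. x $ k = t} \<in> null_sets (density lborel f)"
      using AE_not_in[OF hyperplane_null_sets_lborel[of k t]] assms
      by (subst null_sets_density_iff) (auto simp: distributed_def elim!: eventually_mono)
  qed
  finally show ?thesis .
qed

lemma tail_bound_absorb_shift:
  fixes P :: "real \<Rightarrow> real" and C \<delta> \<epsilon> m :: real
  assumes shifted: "\<And>s. 0 < s \<Longrightarrow> P (s + \<delta>) \<le> C * exp (- 2 * m * s\<^sup>2)"
    and "P \<epsilon> \<le> 1" "1 \<le> C" "0 < m" "0 \<le> \<delta>" "0 < \<epsilon>"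
  shows "P \<epsilon> \<le> C * exp (- 2 * m * \<epsilon>\<^sup>2 + 4 * m * \<delta> * \<epsilon>)"
proof (cases "\<delta> < \<epsilon>")
  case True
  have "P \<epsilon> \<le> C * exp (- 2 * m * (\<epsilon> - \<delta>)\<^sup>2)"
    using shifted[of "\<epsilon> - \<delta>"] True by simp
  also have "\<dots> \<le> C * exp (- 2 * m * \<epsilon>\<^sup>2 + 4 * m * \<delta> * \<epsilon>)"
  proof -
    have "- 2 * m * (\<epsilon> - \<delta>)\<^sup>2 = - 2 * m * \<epsilon>\<^sup>2 + 4 * m * \<delta> * \<epsilon> - 2 * m * \<delta>\<^sup>2"
      by (simp add: power2_diff algebra_simps)
    moreover have "0 \<le> 2 * m * \<delta>\<^sup>2"
      using \<open>0 < m\<close> by simp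
    ultimately show ?thesis
      using \<open>1 \<le> C\<close> by (intro mult_left_mono) auto
  qed
  finally show ?thesis .
next
  case False
  have "2 * m * \<epsilon>\<^sup>2 \<le> 2 * m * \<delta> * \<epsilon>"
    using False \<open>0 < m\<close> \<open>0 < \<epsilon>\<close> by (simp add: power2_eq_square mult_left_mono mult_right_mono)
  also have "\<dots> \<le> 4 * m * \<delta> * \<epsilon>"
    using \<open>0 < m\<close> \<open>0 \<le> \<delta>\<close> \<open>0 < \<epsilon>\<close> by simp
  finally have "1 \<le> exp (- 2 * m * \<epsilon>\<^sup>2 + 4 * m * \<delta> * \<epsilon>)"
    by simp
  then have "1 \<le> C * exp (- 2 * m * \<epsilon>\<^sup>2 + 4 * m * \<delta> * \<epsilon>)"
    using \<open>1 \<le> C\<close> by (metis mult_mono' mult_1 zero_le_one)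
  then show ?thesis
    using \<open>P \<epsilon> \<le> 1\<close> by linarith
qed

locale continuous_iid_sample = prob_space M for M :: "'a measure" +
  fixes X :: "'a \<Rightarrow> real^'d" and Xs :: "nat \<Rightarrow> 'a \<Rightarrow> real^'d" and n :: nat
  assumes X_measurable [measurable]: "X \<in> borel_measurable M"
    and indep: "indep_vars (\<lambda>_. borel) Xs {1..n}"
    and identically_distributed: "\<And>i. i \<in> {1..n} \<Longrightarrow> distr M borel (Xs i) = distr M borel X"
    and atomless_marginals: "\<And>k t. prob {\<omega> \<in> space M. X \<omega> $ k = t} = 0"
    and sample_size_pos: "1 \<le> n"
begin

lemma Xs_measurable [measurable]: "i \<in> {1..n} \<Longrightarrow> Xs i \<in> borel_measurable M"
  using indep by (auto simp: indep_vars_def)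

lemma coordinate_measurable [measurable]: "(\<lambda>\<omega>. X \<omega> $ k) \<in> borel_measurable M"
  by (rule measurable_compose[OF X_measurable borel_measurable_nth])

definition marginal :: "'d \<Rightarrow> real measure" where
  "marginal k = distr M borel (\<lambda>\<omega>. X \<omega> $ k)"

definition marginal_cdf :: "'d \<Rightarrow> real \<Rightarrow> real" where
  "marginal_cdf k = cdf (marginal k)"

lemma real_distribution_marginal: "real_distribution (marginal k)"
  unfolding marginal_def by (rule real_distribution_distr) simp

lemma measure_marginal:
  "A \<in> sets borel \<Longrightarrow> measure (marginal k) A = prob {\<omega> \<in> space M. X \<omega> $ k \<in> A}"
  unfolding marginal_def by (simp add: measure_distr vimage_def Int_def conj_commute)

lemma finite_borel_measure_marginal: "finite_borel_measure (marginal k)"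
  by (rule real_distribution.finite_borel_measure_M[OF real_distribution_marginal])

lemma marginal_cdf_mono: "mono (marginal_cdf k)"
  using finite_borel_measure.cdf_nondecreasing[OF finite_borel_measure_marginal]
  by (simp add: mono_def marginal_cdf_def)

lemma marginal_cdf_measurable [measurable]: "marginal_cdf k \<in> borel_measurable borel"
  by (rule borel_measurable_mono[OF marginal_cdf_mono])

lemma marginal_cdf_bounds: "0 \<le> marginal_cdf k t" "marginal_cdf k t \<le> 1"
  using finite_borel_measure.cdf_nonneg[OF finite_borel_measure_marginal]
    real_distribution.cdf_bounded_prob[OF real_distribution_marginal]
  by (simp_all add: marginal_cdf_def)

lemma prob_marginal_cdf_between:
  assumes "0 \<le> v" "v \<le> u" "u \<le> 1"
  shows "prob {\<omega> \<in> space M. marginal_cdf k (X \<omega> $ k) \<in> {v..u}} \<le> u - v"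
proof -
  have atomless: "measure (marginal k) {t} = 0" for t
    using atomless_marginals by (simp add: measure_marginal)
  have "{t. v \<le> marginal_cdf k t \<and> marginal_cdf k t \<le> u} \<in> sets borel"
    by measurable
  then have "prob {\<omega> \<in> space M. marginal_cdf k (X \<omega> $ k) \<in> {v..u}}
      = measure (marginal k) {t. v \<le> cdf (marginal k) t \<and> cdf (marginal k) t \<le> u}"
    by (simp add: measure_marginal marginal_cdf_def)
  also have "\<dots> \<le> u - v"
    using real_distribution_marginal atomless assms by (rule real_distribution.measure_cdf_between)
  finally show ?thesis .
qed

lemma prob_marginal_cdf_in_cell:
  assumes "j < n"
  shows "prob {\<omega> \<in> space M. marginal_cdf k (X \<omega> $ k) \<in> {real j / real n .. real (j + 1) / real n}}
           \<le> 1 / real n"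
proof -
  have "real (j + 1) / real n \<le> 1"
    using assms by simp
  then have "prob {\<omega> \<in> space M. marginal_cdf k (X \<omega> $ k) \<in> {real j / real n .. real (j + 1) / real n}}
      \<le> real (j + 1) / real n - real j / real n"
    by (intro prob_marginal_cdf_between) (auto simp: divide_right_mono)
  also have "\<dots> = 1 / real n"
    by (simp add: diff_divide_distrib[symmetric])
  finally show ?thesis .
qed

text \<open>
  Grid boxes are cut out by levels of the marginal distribution functions rather than by
  quantiles, so no (possibly non-unique) quantile has to be chosen.
\<close>

definition grid_box :: "('d \<Rightarrow> nat) \<times> ('d \<Rightarrow> nat) \<Rightarrow> (real^'d) set" where
  "grid_box p = {x. \<forall>k. marginal_cdf k (x $ k) \<in> {real (fst p k) / real n .. real (snd p k) / real n}}"

definition grid_indices :: "(('d \<Rightarrow> nat) \<times> ('d \<Rightarrow> nat)) set" where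
  "grid_indices = (UNIV \<rightarrow>\<^sub>E {..<n}) \<times> (UNIV \<rightarrow>\<^sub>E {1..n})"

definition shrink :: "('d \<Rightarrow> nat) \<times> ('d \<Rightarrow> nat) \<Rightarrow> ('d \<Rightarrow> nat) \<times> ('d \<Rightarrow> nat)" where
  "shrink p = (\<lambda>k. fst p k + 1, \<lambda>k. snd p k - 1)"

lemma grid_box_borel [measurable]: "grid_box p \<in> sets borel"
proof -
  have "grid_box p =
      (\<Inter>k. (\<lambda>x. marginal_cdf k (x $ k)) -` {real (fst p k) / real n .. real (snd p k) / real n})"
    by (auto simp: grid_box_def)
  also have "\<dots> \<in> sets borel"
  proof (intro sets.finite_INT measurable_sets_borel)
    show "(\<lambda>x. marginal_cdf k (x $ k)) \<in> borel_measurable borel" for k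
      by measurable
  qed auto
  finally show ?thesis .
qed

lemma finite_grid_indices: "finite grid_indices"
  unfolding grid_indices_def by (auto intro!: finite_PiE)

lemma card_grid_indices: "card grid_indices = n ^ (2 * CARD('d))"
  unfolding grid_indices_def
  by (simp add: card_cartesian_product card_PiE mult_2 power_add)

lemma shrink_grid_box_cases:
  assumes "p \<in> grid_indices"
  shows "grid_box (shrink p) = {} \<or> shrink p \<in> grid_indices"
proof (cases "\<forall>k. fst p k + 1 \<le> snd p k - 1")
  case True
  have bounds: "fst p k < n \<and> 1 \<le> snd p k \<and> snd p k \<le> n" for k
    using assms by (auto simp: grid_indices_def PiE_UNIV_domain)
  have "fst p k + 1 < n \<and> 1 \<le> snd p k - 1 \<and> snd p k - 1 \<le> n" for k
    using True[rule_format, of k] bounds[of k] by arith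
  then have "shrink p \<in> grid_indices"
    by (auto simp: grid_indices_def shrink_def PiE_UNIV_domain)
  then show ?thesis ..
next
  case False
  then obtain k where "snd p k - 1 < fst p k + 1" by (auto simp: not_le)
  then have "real (snd p k - 1) / real n < real (fst p k + 1) / real n"
    using sample_size_pos by (intro divide_strict_right_mono) auto
  then have "{real (fst (shrink p) k) / real n .. real (snd (shrink p) k) / real n} = {}"
    by (simp add: shrink_def)
  then have "grid_box (shrink p) = {}"
    unfolding grid_box_def by blast
  then show ?thesis ..
qed

definition bracket :: "real^'d \<Rightarrow> real^'d \<Rightarrow> ('d \<Rightarrow> nat) \<times> ('d \<Rightarrow> nat)" where
  "bracket x1 x2 =
    (\<lambda>k. grid_floor n (marginal_cdf k (x1 $ k)), \<lambda>k. grid_ceiling n (marginal_cdf k (x2 $ k)))"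

lemma bracket_in_grid_indices: "bracket x1 x2 \<in> grid_indices"
proof -
  have "grid_floor n (marginal_cdf k (x1 $ k)) \<in> {..<n}" for k
    using sample_size_pos by (simp add: grid_floor_less)
  moreover have "grid_ceiling n (marginal_cdf k (x2 $ k)) \<in> {1..n}" for k
    using sample_size_pos marginal_cdf_bounds grid_ceiling_pos
    by (simp add: grid_ceiling_le Suc_le_eq)
  ultimately show ?thesis
    by (simp add: bracket_def grid_indices_def PiE_UNIV_domain)
qed

lemma box_subset_grid_box_bracket: "{x1..x2} \<subseteq> grid_box (bracket x1 x2)"
proof
  fix x assume "x \<in> {x1..x2}"
  have "marginal_cdf k (x $ k)
      \<in> {real (fst (bracket x1 x2) k) / real n .. real (snd (bracket x1 x2) k) / real n}" for k
  proof -
    have "marginal_cdf k (x1 $ k) \<le> marginal_cdf k (x $ k)"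
      and "marginal_cdf k (x $ k) \<le> marginal_cdf k (x2 $ k)"
      using \<open>x \<in> {x1..x2}\<close> marginal_cdf_mono by (auto simp: less_eq_vec_def mono_def)
    moreover have "real (grid_floor n (marginal_cdf k (x1 $ k))) / real n \<le> marginal_cdf k (x1 $ k)"
      using marginal_cdf_bounds by (intro grid_floor_le) auto
    moreover have "marginal_cdf k (x2 $ k) \<le> real (grid_ceiling n (marginal_cdf k (x2 $ k))) / real n"
      using sample_size_pos by (rule le_grid_ceiling)
    ultimately show ?thesis by (simp add: bracket_def)
  qed
  then show "x \<in> grid_box (bracket x1 x2)"
    by (simp add: grid_box_def)
qed

lemma grid_box_shrink_bracket_subset_box: "grid_box (shrink (bracket x1 x2)) \<subseteq> {x1..x2}"
proof
  fix x assume x: "x \<in> grid_box (shrink (bracket x1 x2))"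
  have "x1 $ k \<le> x $ k \<and> x $ k \<le> x2 $ k" for k
  proof -
    define z where "z = marginal_cdf k (x $ k)"
    define lo where "lo = grid_floor n (marginal_cdf k (x1 $ k))"
    define hi where "hi = grid_ceiling n (marginal_cdf k (x2 $ k))"
    have z: "real (lo + 1) / real n \<le> z" "z \<le> real (hi - 1) / real n"
      using x by (auto simp: grid_box_def shrink_def bracket_def z_def lo_def hi_def)
    have "hi \<le> n"
      using sample_size_pos marginal_cdf_bounds by (simp add: hi_def grid_ceiling_le)
    then have "real (hi - 1) / real n < 1"
      using sample_size_pos by simp
    then have "z < 1"
      using z(2) by linarith
    then have "marginal_cdf k (x1 $ k) < z"
      using grid_floor_Suc_le_imp_less[OF sample_size_pos z(1)[unfolded lo_def]] by blast
    moreover have "0 < real (lo + 1) / real n"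
      using sample_size_pos by simp
    then have "0 < z"
      using z(1) by linarith
    then have "z < marginal_cdf k (x2 $ k)"
      using le_grid_ceiling_pred_imp_less[OF sample_size_pos z(2)[unfolded hi_def]] by blast
    ultimately have "x1 $ k < x $ k" "x $ k < x2 $ k"
      unfolding z_def by (auto elim: mono_strict_invE[OF marginal_cdf_mono])
    then show ?thesis by simp
  qed
  then show "x \<in> {x1..x2}"
    by (simp add: less_eq_vec_def)
qed

definition empirical_prob :: "(real^'d) set \<Rightarrow> 'a \<Rightarrow> real" where
  "empirical_prob S \<omega> = (\<Sum>i\<in>{1..n}. indicator S (Xs i \<omega>)) / real n"

definition true_prob :: "(real^'d) set \<Rightarrow> real" where
  "true_prob S = prob {\<omega> \<in> space M. X \<omega> \<in> S}"

lemma empirical_prob_mono: "S \<subseteq> T \<Longrightarrow> empirical_prob S \<omega> \<le> empirical_prob T \<omega>"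
  unfolding empirical_prob_def by (intro divide_right_mono sum_mono) (auto simp: indicator_def)

lemma true_prob_mono: "S \<subseteq> T \<Longrightarrow> T \<in> sets borel \<Longrightarrow> true_prob S \<le> true_prob T"
  unfolding true_prob_def by (intro finite_measure_mono) auto

lemma true_prob_grid_box_minus_shrink:
  assumes "p \<in> grid_indices"
  shows "true_prob (grid_box p) - true_prob (grid_box (shrink p)) \<le> 2 * real CARD('d) / real n"
proof -
  define cell where
    "cell k j =
      {\<omega> \<in> space M. marginal_cdf k (X \<omega> $ k) \<in> {real j / real n .. real (j + 1) / real n}}" for k j
  define edge where "edge k = cell k (fst p k) \<union> cell k (snd p k - 1)" for k
  have bounds: "fst p k < n" "1 \<le> snd p k" "snd p k \<le> n" for k
    using assms by (auto simp: grid_indices_def PiE_UNIV_domain)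
  have cell_sets: "cell k j \<in> sets M" for k j
    unfolding cell_def by measurable
  let ?E = "\<lambda>q. {\<omega> \<in> space M. X \<omega> \<in> grid_box q}"
  have "?E p - ?E (shrink p) \<subseteq> (\<Union>k. edge k)"
  proof
    fix \<omega> assume "\<omega> \<in> ?E p - ?E (shrink p)"
    then obtain k where "\<omega> \<in> space M"
        "marginal_cdf k (X \<omega> $ k) \<in> {real (fst p k) / real n .. real (snd p k) / real n}"
        "marginal_cdf k (X \<omega> $ k) \<notin> {real (fst p k + 1) / real n .. real (snd p k - 1) / real n}"
      by (auto simp: grid_box_def shrink_def)
    then have "\<omega> \<in> edge k"
      using bounds(2)[of k] by (auto simp: edge_def cell_def of_nat_diff)
    then show "\<omega> \<in> (\<Union>k. edge k)" by blast
  qed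
  then have "prob (?E p - ?E (shrink p)) \<le> prob (\<Union>k. edge k)"
    using cell_sets by (intro finite_measure_mono) (auto simp: edge_def)
  moreover have "true_prob (grid_box p) - true_prob (grid_box (shrink p)) \<le> prob (?E p - ?E (shrink p))"
    unfolding true_prob_def by (rule measure_diff_le_measure_setdiff) (simp_all add: fmeasurable_eq_sets)
  ultimately have "true_prob (grid_box p) - true_prob (grid_box (shrink p)) \<le> prob (\<Union>k. edge k)"
    by linarith
  also have "\<dots> \<le> (\<Sum>k\<in>UNIV. prob (edge k))"
    using cell_sets by (intro finite_measure_subadditive_finite) (auto simp: edge_def)
  also have "\<dots> \<le> (\<Sum>k\<in>(UNIV :: 'd set). 2 / real n)"
  proof (intro sum_mono)
    fix k
    have "prob (edge k) \<le> prob (cell k (fst p k)) + prob (cell k (snd p k - 1))"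
      unfolding edge_def by (rule measure_Un_le[OF cell_sets cell_sets])
    also have "\<dots> \<le> 1 / real n + 1 / real n"
      using bounds[of k] unfolding cell_def
      by (intro add_mono prob_marginal_cdf_in_cell) auto
    finally show "prob (edge k) \<le> 2 / real n" by simp
  qed
  also have "\<dots> = 2 * real CARD('d) / real n"
    by simp
  finally show ?thesis .
qed

lemma box_deviation_less:
  assumes small: "\<forall>p\<in>grid_indices. \<bar>empirical_prob (grid_box p) \<omega> - true_prob (grid_box p)\<bar> < s"
    and "0 < s"
  shows "\<bar>empirical_prob {x1..x2} \<omega> - true_prob {x1..x2}\<bar> < s + 2 * real CARD('d) / real n"
proof -
  define p where "p = bracket x1 x2"
  have p: "p \<in> grid_indices"
    unfolding p_def by (rule bracket_in_grid_indices)
  have outer: "{x1..x2} \<subseteq> grid_box p" and inner: "grid_box (shrink p) \<subseteq> {x1..x2}"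
    unfolding p_def by (rule box_subset_grid_box_bracket grid_box_shrink_bracket_subset_box)+
  have "\<bar>empirical_prob (grid_box p) \<omega> - true_prob (grid_box p)\<bar> < s"
    using small p by blast
  moreover have "\<bar>empirical_prob (grid_box (shrink p)) \<omega> - true_prob (grid_box (shrink p))\<bar> < s"
    using shrink_grid_box_cases[OF p] small \<open>0 < s\<close>
    by (auto simp: empirical_prob_def true_prob_def)
  moreover have "true_prob (grid_box p) - true_prob (grid_box (shrink p)) \<le> 2 * real CARD('d) / real n"
    using p by (rule true_prob_grid_box_minus_shrink)
  moreover have "empirical_prob (grid_box (shrink p)) \<omega> \<le> empirical_prob {x1..x2} \<omega>"
    "empirical_prob {x1..x2} \<omega> \<le> empirical_prob (grid_box p) \<omega>"
    using inner outer by (auto intro: empirical_prob_mono)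
  moreover have "true_prob (grid_box (shrink p)) \<le> true_prob {x1..x2}"
    "true_prob {x1..x2} \<le> true_prob (grid_box p)"
    using inner outer by (auto intro: true_prob_mono)
  ultimately show ?thesis
    by (simp add: abs_less_iff)
qed

lemma emp_box_prob_eq: "emp_box_prob n Xs \<omega> x1 x2 = empirical_prob {x1..x2} \<omega>"
  by (simp add: emp_box_prob_def empirical_prob_def)

lemma box_prob_eq: "box_prob M X x1 x2 = true_prob {x1..x2}"
  by (simp add: box_prob_def true_prob_def)

definition box_discrepancy :: "'a \<Rightarrow> real" where
  "box_discrepancy \<omega> = (SUP p. \<bar>emp_box_prob n Xs \<omega> (fst p) (snd p) - box_prob M X (fst p) (snd p)\<bar>)"

lemma prob_box_discrepancy_gt:
  assumes "0 < s"
  shows "prob {\<omega> \<in> space M. box_discrepancy \<omega> > s + 2 * real CARD('d) / real n}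
           \<le> 2 * real n ^ (2 * CARD('d)) * exp (- 2 * real n * s\<^sup>2)"
proof -
  let ?t = "s + 2 * real CARD('d) / real n"
  define bad where
    "bad p = {\<omega> \<in> space M. s \<le> \<bar>empirical_prob (grid_box p) \<omega> - true_prob (grid_box p)\<bar>}" for p
  have bad_sets: "bad p \<in> sets M" for p
    unfolding bad_def empirical_prob_def by measurable
  have "{\<omega> \<in> space M. box_discrepancy \<omega> > ?t} \<subseteq> (\<Union>p\<in>grid_indices. bad p)"
  proof (rule subsetI, rule ccontr)
    fix \<omega> assume \<omega>: "\<omega> \<in> {\<omega> \<in> space M. box_discrepancy \<omega> > ?t}"
      and "\<omega> \<notin> (\<Union>p\<in>grid_indices. bad p)"
    then have "\<forall>p\<in>grid_indices. \<bar>empirical_prob (grid_box p) \<omega> - true_prob (grid_box p)\<bar> < s"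
      by (auto simp: bad_def not_le)
    then have "\<bar>emp_box_prob n Xs \<omega> x1 x2 - box_prob M X x1 x2\<bar> < ?t" for x1 x2
      unfolding emp_box_prob_eq box_prob_eq using \<open>0 < s\<close> by (rule box_deviation_less)
    then have "box_discrepancy \<omega> \<le> ?t"
      unfolding box_discrepancy_def by (intro cSUP_least) (auto intro: less_imp_le)
    then show False using \<omega> by simp
  qed
  then have "prob {\<omega> \<in> space M. box_discrepancy \<omega> > ?t} \<le> prob (\<Union>p\<in>grid_indices. bad p)"
    using bad_sets finite_grid_indices by (intro finite_measure_mono) auto
  also have "\<dots> \<le> (\<Sum>p\<in>grid_indices. prob (bad p))"
    using bad_sets finite_grid_indices by (intro finite_measure_subadditive_finite) auto
  also have "\<dots> \<le> (\<Sum>p\<in>grid_indices. 2 * exp (- 2 * real n * s\<^sup>2))"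
  proof (intro sum_mono)
    fix p
    show "prob (bad p) \<le> 2 * exp (- 2 * real n * s\<^sup>2)"
      using Hoeffding_empirical_frequency[OF indep _ _ identically_distributed X_measurable grid_box_borel]
        sample_size_pos \<open>0 < s\<close>
      by (simp add: bad_def empirical_prob_def true_prob_def)
  qed
  also have "\<dots> = 2 * real n ^ (2 * CARD('d)) * exp (- 2 * real n * s\<^sup>2)"
    by (simp add: card_grid_indices)
  finally show ?thesis .
qed

lemma box_discrepancy_tail_bounds:
  assumes "0 < \<epsilon>"
  defines "C \<equiv> 2 * real n ^ (2 * CARD('d))"
  shows "prob {\<omega> \<in> space M. box_discrepancy \<omega> > \<epsilon>}
           \<le> C * exp (- 2 * real n * \<epsilon>\<^sup>2 + 16 * \<epsilon> * real CARD('d))"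
    and "prob {\<omega> \<in> space M. box_discrepancy \<omega> > 4 * real CARD('d) / real n + \<epsilon>}
           \<le> C * exp (- 2 * real n * \<epsilon>\<^sup>2)"
proof -
  define \<delta> where "\<delta> = 2 * real CARD('d) / real n"
  let ?P = "\<lambda>t. prob {\<omega> \<in> space M. box_discrepancy \<omega> > t}"
  have shifted: "?P (s + \<delta>) \<le> C * exp (- 2 * real n * s\<^sup>2)" if "0 < s" for s
    using prob_box_discrepancy_gt[OF that] by (simp add: C_def \<delta>_def)
  have "1 \<le> real n ^ (2 * CARD('d))"
    using sample_size_pos by simp
  then have "1 \<le> C"
    unfolding C_def by linarith
  have "0 < real n" "0 \<le> \<delta>"
    using sample_size_pos by (simp_all add: \<delta>_def)
  have "?P \<epsilon> \<le> C * exp (- 2 * real n * \<epsilon>\<^sup>2 + 4 * real n * \<delta> * \<epsilon>)"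
    using shifted \<open>1 \<le> C\<close> \<open>0 < real n\<close> \<open>0 \<le> \<delta>\<close> \<open>0 < \<epsilon>\<close>
    by (intro tail_bound_absorb_shift) auto
  also have "\<dots> \<le> C * exp (- 2 * real n * \<epsilon>\<^sup>2 + 16 * \<epsilon> * real CARD('d))"
    using \<open>1 \<le> C\<close> \<open>0 < real n\<close> \<open>0 < \<epsilon>\<close> by (simp add: \<delta>_def)
  finally show "?P \<epsilon> \<le> C * exp (- 2 * real n * \<epsilon>\<^sup>2 + 16 * \<epsilon> * real CARD('d))" .
  have "?P (4 * real CARD('d) / real n + \<epsilon>) = ?P ((\<epsilon> + \<delta>) + \<delta>)"
    by (simp add: \<delta>_def algebra_simps)
  also have "\<dots> \<le> C * exp (- 2 * real n * (\<epsilon> + \<delta>)\<^sup>2)"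
    by (rule shifted) (use \<open>0 \<le> \<delta>\<close> \<open>0 < \<epsilon>\<close> in linarith)
  also have "\<dots> \<le> C * exp (- 2 * real n * \<epsilon>\<^sup>2)"
    using \<open>1 \<le> C\<close> \<open>0 < real n\<close> \<open>0 \<le> \<delta>\<close> \<open>0 < \<epsilon>\<close> by (simp add: power_mono)
  finally show "?P (4 * real CARD('d) / real n + \<epsilon>) \<le> C * exp (- 2 * real n * \<epsilon>\<^sup>2)" .
qed

end

theorem lemma2:
  fixes M :: "'a measure" and X :: "'a \<Rightarrow> real^'d" and Xs :: "nat \<Rightarrow> 'a \<Rightarrow> real^'d"
    and n :: nat and \<epsilon> :: real
  assumes "prob_space M"
    and "\<exists>f. distributed M lborel X f"
    and "prob_space.indep_vars M (\<lambda>_. borel) Xs {1..n}"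
    and "\<forall>i\<in>{1..n}. distr M borel (Xs i) = distr M borel X"
    and "n \<ge> 1"
    and "\<epsilon> > 0"
  shows "measure M {\<omega> \<in> space M.
            (SUP p\<in>UNIV. \<bar>emp_box_prob n Xs \<omega> (fst p) (snd p) - box_prob M X (fst p) (snd p)\<bar>) > \<epsilon>}
           \<le> 2 * real n ^ (2 * CARD('d)) * exp (- 2 * real n * \<epsilon>\<^sup>2 + 16 * \<epsilon> * real CARD('d))
       \<and> measure M {\<omega> \<in> space M.
            (SUP p\<in>UNIV. \<bar>emp_box_prob n Xs \<omega> (fst p) (snd p) - box_prob M X (fst p) (snd p)\<bar>)
              > 4 * real CARD('d) / real n + \<epsilon>}
           \<le> 2 * real n ^ (2 * CARD('d)) * exp (- 2 * real n * \<epsilon>\<^sup>2)"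
proof -
  interpret prob_space M by fact
  obtain f where f: "distributed M lborel X f"
    using assms(2) by blast
  interpret continuous_iid_sample M X Xs n
  proof
    show "X \<in> borel_measurable M"
      using f distributed_measurable measurable_lborel1 by metis
  qed (use assms(3-5) prob_coordinate_eq_0_if_distributed[OF f] in auto)
  show ?thesis
    using box_discrepancy_tail_bounds[OF assms(6)] by (simp add: box_discrepancy_def)
qed

end
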